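(* Let $k\ge 3$, $k'=k-1$, and $A\in\mathcal{M}_d$. Let $\pi\in S_{2k'}$ be the cycle $\pi=(2k'\!-\!1\;\;2k'\!-\!2\;\cdots\;k'\!+\!1\;\;k')$. Then $$\operatorname{tr}_1\big[(1\,2\cdots k)^{T_k}(A\otimes\mathbb{1}^{\otimes(k-1)})\big]=\tau^{-1}\pi\,\tau\big(A\otimes\mathbb{1}^{\otimes(k-2)}\big).$$
   Context: $\mathcal{M}_d$ denotes complex $d\times d$ matrices; $\{|i\rangle\}$ is a fixed orthonormal basis of $\mathbb{C}^d$. A permutation $\sigma\in S_n$ acts on $(\mathbb{C}^d)^{\otimes n}$ by $\sigma|v_1\rangle\otimes\cdots\otimes|v_n\rangle=|v_{\sigma^{-1}(1)}\rangle\otimes\cdots\otimes|v_{\sigma^{-1}(n)}\rangle$; cycle notation $(a_1\,a_2\cdots a_r)$ means $a_1\to a_2\to\cdots\to a_r\to a_1$. $T_k$ is the partial transpose on the $k$-th factor in the basis $\{|i\rangle\}$; $\operatorname{tr}_1$ is the partial trace over the first factor. $\tau$ is the linear map from operators on $(\mathbb{C}^d)^{\otimes k'}$ to vectors in $(\mathbb{C}^d)^{\otimes 2k'}$ defined by $\tau(|i_1\dots i_{k'}\rangle\langle j_1\dots j_{k'}|)=|i_1\dots i_{k'}\rangle|j_1\dots j_{k'}\rangle$, and $\tau^{-1}$ is its inverse; thus $\tau^{-1}\pi\tau$ applies $\pi$ (acting on $(\mathbb{C}^d)^{\otimes 2k'}$) to the combined list of ket and bra indices. *)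

theory Defs
  imports "HOL-Combinatorics.Cycles" "Jordan_Normal_Form.Matrix"
begin

text \<open>An operator on (C^d)^{\<otimes>n} is given by its matrix elements X a b = <a|X|b>;
  a vector by its coefficients v c = <c|v>. Tensor positions are 1-based in the
  paper; position m corresponds to list index m-1.\<close>

type_synonym idx = "nat list"
type_synonym op = "idx \<Rightarrow> idx \<Rightarrow> complex"
type_synonym vec = "idx \<Rightarrow> complex"

definition idxs :: "nat \<Rightarrow> nat \<Rightarrow> idx set" where
  "idxs d n = {xs. length xs = n \<and> set xs \<subseteq> {..<d}}"

definition op_eq :: "nat \<Rightarrow> nat \<Rightarrow> op \<Rightarrow> op \<Rightarrow> bool" where
  "op_eq d n X Y \<longleftrightarrow> (\<forall>a\<in>idxs d n. \<forall>b\<in>idxs d n. X a b = Y a b)"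

definition op_mult :: "nat \<Rightarrow> nat \<Rightarrow> op \<Rightarrow> op \<Rightarrow> op" where
  "op_mult d n X Y = (\<lambda>a b. \<Sum>c\<in>idxs d n. X a c * Y c b)"

definition mat_op :: "complex mat \<Rightarrow> op" where
  "mat_op A = (\<lambda>a b. A $$ (a ! 0, b ! 0))"

definition id_op :: op where
  "id_op = (\<lambda>a b. if a = b then 1 else 0)"

definition tensor_op :: "nat \<Rightarrow> op \<Rightarrow> op \<Rightarrow> op" where
  "tensor_op n X Y = (\<lambda>a b. X (take n a) (take n b) * Y (drop n a) (drop n b))"

text \<open>Permutation action on basis tuples:
  sigma |i_1..i_n> = |i_{sigma^-1(1)} .. i_{sigma^-1(n)}>.\<close>
definition perm_idx :: "nat \<Rightarrow> (nat \<Rightarrow> nat) \<Rightarrow> idx \<Rightarrow> idx" where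
  "perm_idx n sg b = map (\<lambda>m. b ! (inv_into UNIV sg (m + 1) - 1)) [0..<n]"

definition perm_op :: "nat \<Rightarrow> (nat \<Rightarrow> nat) \<Rightarrow> op" where
  "perm_op n sg = (\<lambda>a b. if a = perm_idx n sg b then 1 else 0)"

definition perm_vec :: "nat \<Rightarrow> nat \<Rightarrow> (nat \<Rightarrow> nat) \<Rightarrow> vec \<Rightarrow> vec" where
  "perm_vec d n sg v = (\<lambda>c. \<Sum>b\<in>idxs d n. if c = perm_idx n sg b then v b else 0)"

definition ptrans :: "nat \<Rightarrow> op \<Rightarrow> op" where
  "ptrans p X = (\<lambda>a b. X (a[p - 1 := b ! (p - 1)]) (b[p - 1 := a ! (p - 1)]))"

definition ptr1 :: "nat \<Rightarrow> op \<Rightarrow> op" where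
  "ptr1 d X = (\<lambda>a b. \<Sum>i<d. X (i # a) (i # b))"

text \<open>tau: |i><j| \<mapsto> |i>|j> for operators on k' factors, and its inverse.\<close>
definition tau :: "nat \<Rightarrow> op \<Rightarrow> vec" where
  "tau n X = (\<lambda>c. X (take n c) (drop n c))"

definition tau_inv :: "vec \<Rightarrow> op" where
  "tau_inv v = (\<lambda>a b. v (a @ b))"

end

theory Submission
  imports Defs
begin

(* Both sides are evaluated entrywise on basis tuples a, b of length k' \<ge> 2: each equals
   A_(hd a, last a) if b = (a_2, ..., a_(k'-1), t, t) for some t, and 0 otherwise.
   On the left, the entry of the partially transposed cyclic shift at (i # a, x # b) is 1 exactly
   when i = last a and x # butlast b = butlast a @ [last b], so the partial trace against
   A \<otimes> 1 keeps only i = last a and x = hd a. On the right, the coefficient of the permuted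
   vector at a @ b is the coefficient of tau (A \<otimes> 1) at the inversely permuted tuple, which
   moves the second-to-last entry of b in front of last a; splitting it into ket and bra and
   comparing tails gives the same condition. *)

lemma cycle_of_list_nth:
  assumes "distinct cs" and "i < length cs"
  shows "cycle_of_list cs (cs ! i) = cs ! (Suc i mod length cs)"
proof -
  have "map (cycle_of_list cs) cs = rotate1 cs"
    using cyclic_rotation[OF assms(1), of 1] by simp
  then show ?thesis
    using assms(2) by (metis nth_map nth_rotate1)
qed

lemma cycle_of_list_upt_Suc:
  assumes "j < k"
  shows "cycle_of_list [1..<k + 1] (Suc j) = Suc (Suc j mod k)"
  using cycle_of_list_nth[of "[1..<k + 1]" j] assms by (simp del: upt_Suc)

lemma cycle_of_list_rev_upt:
  assumes "m \<le> j" and "j < m + l"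
  shows "cycle_of_list (rev [m..<m + l]) j = (if j = m then m + l - 1 else j - 1)"
proof -
  have nth: "rev [m..<m + l] ! i = m + l - 1 - i" if "i < l" for i
    using that by (simp add: rev_nth)
  have "cycle_of_list (rev [m..<m + l]) (rev [m..<m + l] ! (m + l - 1 - j))
      = rev [m..<m + l] ! (Suc (m + l - 1 - j) mod l)"
    using cycle_of_list_nth[of "rev [m..<m + l]" "m + l - 1 - j"] assms by simp
  moreover have "Suc (m + l - 1 - j) mod l = (if j = m then 0 else Suc (m + l - 1 - j))"
    using assms by auto
  ultimately show ?thesis
    using assms by (auto simp: nth)
qed

lemma perm_idx_eq_iff:
  assumes p: "p permutes {1..N}" and "length c = N" and "length v = N"
  shows "c = perm_idx N p v \<longleftrightarrow> (\<forall>j<N. v ! j = c ! (p (Suc j) - 1))"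
proof -
  have "c = perm_idx N p v \<longleftrightarrow> (\<forall>m<N. c ! m = v ! (inv_into UNIV p (Suc m) - 1))"
    using assms(2) by (simp add: perm_idx_def list_eq_iff_nth_eq)
  also have "\<dots> \<longleftrightarrow> (\<forall>j<N. v ! j = c ! (p (Suc j) - 1))"
  proof (intro iffI allI impI)
    fix j assume "\<forall>m<N. c ! m = v ! (inv_into UNIV p (Suc m) - 1)" and "j < N"
    moreover have "p (Suc j) \<in> {1..N}"
      using permutes_in_image[OF p] \<open>j < N\<close> by simp
    then have "p (Suc j) - 1 < N" and "Suc (p (Suc j) - 1) = p (Suc j)"
      by auto
    ultimately show "v ! j = c ! (p (Suc j) - 1)"
      by (simp add: permutes_inverses(2)[OF p])
  next
    fix m assume "\<forall>j<N. v ! j = c ! (p (Suc j) - 1)" and "m < N"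
    moreover have "inv_into UNIV p (Suc m) \<in> {1..N}"
      using permutes_in_image[OF permutes_inv[OF p]] \<open>m < N\<close> by simp
    then have "inv_into UNIV p (Suc m) - 1 < N" and "Suc (inv_into UNIV p (Suc m) - 1) = inv_into UNIV p (Suc m)"
      by auto
    ultimately show "c ! m = v ! (inv_into UNIV p (Suc m) - 1)"
      by (simp add: permutes_inverses(1)[OF p])
  qed
  finally show ?thesis .
qed

lemma perm_idx_shift_cycle_eq_iff:
  assumes "length c = k" and "length v = k"
  shows "c = perm_idx k (cycle_of_list [1..<k + 1]) v \<longleftrightarrow> v = rotate1 c"
proof -
  have "cycle_of_list [1..<k + 1] permutes {1..k}"
    using cycle_permutes[of "[1..<k + 1]"] by (simp add: atLeastLessThanSuc_atLeastAtMost del: upt_Suc)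
  then have "c = perm_idx k (cycle_of_list [1..<k + 1]) v
      \<longleftrightarrow> (\<forall>j<k. v ! j = c ! (cycle_of_list [1..<k + 1] (Suc j) - 1))"
    using assms by (rule perm_idx_eq_iff)
  also have "\<dots> \<longleftrightarrow> (\<forall>j<k. v ! j = c ! (Suc j mod k))"
    using cycle_of_list_upt_Suc by auto
  also have "\<dots> \<longleftrightarrow> v = rotate1 c"
    using assms by (auto simp: list_eq_iff_nth_eq nth_rotate1)
  finally show ?thesis .
qed

lemma ptrans_shift_cycle_Cons:
  assumes "length a = n" and "length b = n" and "n \<noteq> 0"
  shows "ptrans (Suc n) (perm_op (Suc n) (cycle_of_list [1..<Suc n + 1])) (i # a) (x # b)
     = (if i = last a \<and> x # butlast b = butlast a @ [last b] then 1 else 0)"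
proof -
  have update_last: "xs[length xs - 1 := y] = butlast xs @ [y]" if "xs \<noteq> []" for xs :: "nat list" and y
    using that by (cases xs rule: rev_cases) auto
  obtain m where m: "n = Suc m"
    using assms(3) not0_implies_Suc by blast
  have "a \<noteq> []" and "b \<noteq> []"
    using assms by auto
  then have "a ! m = last a" and "b ! m = last b"
    using assms m by (simp_all add: last_conv_nth)
  then have "(i # a)[n := (x # b) ! n] = i # a[length a - 1 := last b]"
    and "(x # b)[n := (i # a) ! n] = x # b[length b - 1 := last a]"
    using assms m by simp_all
  then have u: "(i # a)[n := (x # b) ! n] = i # butlast a @ [last b]"
    and v: "(x # b)[n := (i # a) ! n] = x # butlast b @ [last a]"
    by (simp_all only: update_last[OF \<open>a \<noteq> []\<close>] update_last[OF \<open>b \<noteq> []\<close>])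
  have "length (i # butlast a @ [last b]) = Suc n" and "length (x # butlast b @ [last a]) = Suc n"
    using assms by auto
  then have "i # butlast a @ [last b] = perm_idx (Suc n) (cycle_of_list [1..<Suc n + 1]) (x # butlast b @ [last a])
      \<longleftrightarrow> x # butlast b @ [last a] = rotate1 (i # butlast a @ [last b])"
    by (rule perm_idx_shift_cycle_eq_iff)
  also have "\<dots> \<longleftrightarrow> i = last a \<and> x # butlast b = butlast a @ [last b]"
    by auto
  finally show ?thesis
    unfolding ptrans_def perm_op_def diff_Suc_1 u v by simp
qed

lemma finite_idxs: "finite (idxs d n)"
  unfolding idxs_def using finite_lists_length_eq[of "{..<d}" n] by (simp add: conj_commute)

lemma idxs_length: "xs \<in> idxs d n \<Longrightarrow> length xs = n"
  by (simp add: idxs_def)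

lemma sum_idxs_Suc: "(\<Sum>c\<in>idxs d (Suc n). f c) = (\<Sum>x<d. \<Sum>xs\<in>idxs d n. f (x # xs))"
proof -
  have image: "idxs d (Suc n) = (\<lambda>(x, xs). x # xs) ` ({..<d} \<times> idxs d n)"
    by (auto simp: idxs_def length_Suc_conv image_iff)
  have inj: "inj_on (\<lambda>(x, xs). x # xs) ({..<d} \<times> idxs d n)"
    by (auto simp: inj_on_def)
  show ?thesis
    unfolding image sum.reindex[OF inj] sum.cartesian_product by (simp add: case_prod_beta)
qed

lemma tensor_mat_op_id_op_Cons:
  "tensor_op 1 (mat_op A) id_op (x # u) (y # v) = (if u = v then A $$ (x, y) else 0)"
  by (simp add: tensor_op_def mat_op_def id_op_def)

lemma tau_append: "length u = n \<Longrightarrow> tau n X (u @ v) = X u v"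
  by (simp add: tau_def)

lemma perm_idx_inv:
  assumes "p permutes {1..N}"
  shows "perm_idx N (inv_into UNIV p) c = map (\<lambda>j. c ! (p (Suc j) - 1)) [0..<N]"
  using assms by (simp add: perm_idx_def inv_inv_eq permutes_bij)

lemma perm_vec_apply:
  assumes p: "p permutes {1..N}" and c: "c \<in> idxs d N"
  shows "perm_vec d N p v c = v (perm_idx N (inv_into UNIV p) c)"
proof -
  let ?w = "perm_idx N (inv_into UNIV p) c"
  have range: "p (Suc j) - 1 < N" if "j < N" for j
    using permutes_in_image[OF p, of "Suc j"] that by auto
  have w: "?w = map (\<lambda>j. c ! (p (Suc j) - 1)) [0..<N]"
    using p by (rule perm_idx_inv)
  have "c ! (p (Suc j) - 1) < d" if "j < N" for j
  proof -
    have "c ! (p (Suc j) - 1) \<in> set c"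
      using range[OF that] idxs_length[OF c] by simp
    then show ?thesis
      using c by (auto simp: idxs_def)
  qed
  then have "?w \<in> idxs d N"
    by (auto simp: w idxs_def)
  moreover have "c = perm_idx N p u \<longleftrightarrow> u = ?w" if "u \<in> idxs d N" for u
    using perm_idx_eq_iff[OF p idxs_length[OF c] idxs_length[OF that]] idxs_length[OF that]
    unfolding w by (auto simp: list_eq_iff_nth_eq)
  ultimately show ?thesis
    unfolding perm_vec_def using finite_idxs by (simp cong: sum.cong)
qed

lemma perm_idx_inv_rev_cycle:
  assumes "length xs = m" and "length ys = l"
  shows "perm_idx (m + l + 2 + length zs) (inv_into UNIV (cycle_of_list (rev [Suc m..<Suc m + (l + 2)])))
           (xs @ y # ys @ z # zs) = xs @ z # y # ys @ zs"
proof -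
  define N where "N = m + l + 2 + length zs"
  define p where "p = cycle_of_list (rev [Suc m..<Suc m + (l + 2)])"
  define c where "c = xs @ y # ys @ z # zs"
  have "p permutes set (rev [Suc m..<Suc m + (l + 2)])"
    unfolding p_def by (rule cycle_permutes)
  then have "p permutes {1..N}"
    by (rule permutes_subset) (auto simp: N_def)
  then have "perm_idx N (inv_into UNIV p) c = map (\<lambda>j. c ! (p (Suc j) - 1)) [0..<N]"
    by (rule perm_idx_inv)
  also have "\<dots> = xs @ z # y # ys @ zs"
  proof (rule nth_equalityI)
    fix j assume "j < length (map (\<lambda>j. c ! (p (Suc j) - 1)) [0..<N])"
    then have "j < N" by simp
    consider "j < m" | "j = m" | "m < j" "j \<le> m + l + 1" | "m + l + 1 < j"
      by linarith
    then show "map (\<lambda>j. c ! (p (Suc j) - 1)) [0..<N] ! j = (xs @ z # y # ys @ zs) ! j"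
    proof cases
      case 1
      then have "p (Suc j) = Suc j"
        unfolding p_def by (intro id_outside_supp) auto
      then show ?thesis using 1 \<open>j < N\<close> assms by (simp add: c_def nth_append)
    next
      case 2
      then have "p (Suc j) = m + l + 2"
        unfolding p_def by (subst cycle_of_list_rev_upt) auto
      then show ?thesis using 2 \<open>j < N\<close> assms by (simp add: c_def nth_append)
    next
      case 3
      define i where "i = j - Suc m"
      have j: "j = Suc (m + i)" and "i \<le> l"
        using 3 by (auto simp: i_def)
      have "p (Suc j) = j"
        unfolding p_def using 3 by (subst cycle_of_list_rev_upt) auto
      moreover have "(y # ys @ z # zs) ! i = (y # ys @ zs) ! i"
        using \<open>i \<le> l\<close> assms by (simp add: nth_append flip: append_Cons)
      ultimately show ?thesis using j \<open>j < N\<close> assms by (simp add: c_def nth_append)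
    next
      case 4
      define i where "i = j - (m + l + 2)"
      have j: "j = m + l + 2 + i"
        using 4 by (simp add: i_def)
      have "p (Suc j) = Suc j"
        unfolding p_def using 4 by (intro id_outside_supp) auto
      then show ?thesis using j \<open>j < N\<close> assms by (simp add: c_def nth_append)
    qed
  qed (simp add: N_def assms)
  finally show ?thesis
    unfolding N_def p_def c_def .
qed

lemma ptr1_mult_ptrans_shift_cycle_tensor:
  assumes n: "2 \<le> n" and a: "a \<in> idxs d n" and b: "b \<in> idxs d n"
  shows "ptr1 d (op_mult d (Suc n) (ptrans (Suc n) (perm_op (Suc n) (cycle_of_list [1..<Suc n + 1])))
                   (tensor_op 1 (mat_op A) id_op)) a b
       = (if b = tl (butlast a) @ [last b, last b] then A $$ (hd a, last a) else 0)"
proof -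
  let ?P = "ptrans (Suc n) (perm_op (Suc n) (cycle_of_list [1..<Suc n + 1]))"
  have la: "length a = n" and lb: "length b = n"
    using a b by (simp_all add: idxs_length)
  obtain a0 as \<alpha> where a_eq: "a = a0 # as @ [\<alpha>]"
    using la n by (cases a; cases "tl a" rule: rev_cases) auto
  obtain bs \<beta> \<gamma> where b_eq: "b = bs @ [\<beta>, \<gamma>]"
    using lb n by (cases b rule: rev_cases; cases "butlast b" rule: rev_cases) auto
  have n0: "n \<noteq> 0"
    using n by simp
  have "hd a < d" and "last a < d"
    using a unfolding a_eq idxs_def by auto
  have "ptr1 d (op_mult d (Suc n) ?P (tensor_op 1 (mat_op A) id_op)) a b
      = (\<Sum>i<d. \<Sum>x<d. \<Sum>ys\<in>idxs d n. if ys = b then ?P (i # a) (x # ys) * A $$ (x, i) else 0)"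
    unfolding ptr1_def op_mult_def sum_idxs_Suc tensor_mat_op_id_op_Cons by (intro sum.cong refl) simp
  also have "\<dots> = (\<Sum>i<d. \<Sum>x<d. ?P (i # a) (x # b) * A $$ (x, i))"
    using b by (simp add: finite_idxs)
  also have "\<dots> = (\<Sum>i<d. \<Sum>x<d. if x = hd a then if i = last a then
                 (if b = tl (butlast a) @ [last b, last b] then A $$ (x, i) else 0) else 0 else 0)"
  proof -
    have "?P (i # a) (x # b) * A $$ (x, i) = (if x = hd a then if i = last a then
            (if b = tl (butlast a) @ [last b, last b] then A $$ (x, i) else 0) else 0 else 0)" for i x
      unfolding ptrans_shift_cycle_Cons[OF la lb n0] by (auto simp: a_eq b_eq butlast_append)
    then show ?thesis
      by (simp only:)
  qed
  also have "\<dots> = (if b = tl (butlast a) @ [last b, last b] then A $$ (hd a, last a) else 0)"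
    using \<open>hd a < d\<close> \<open>last a < d\<close> by simp
  finally show ?thesis .
qed

lemma tau_inv_perm_vec_rev_cycle_tensor:
  assumes n: "2 \<le> n" and a: "a \<in> idxs d n" and b: "b \<in> idxs d n"
  shows "tau_inv (perm_vec d (2 * n) (cycle_of_list (rev [n..<2 * n])) (tau n (tensor_op 1 (mat_op A) id_op))) a b
       = (if b = tl (butlast a) @ [last b, last b] then A $$ (hd a, last a) else 0)"
proof -
  let ?\<pi> = "cycle_of_list (rev [n..<2 * n])"
  have la: "length a = n" and lb: "length b = n"
    using a b by (simp_all add: idxs_length)
  obtain a0 as \<alpha> where a_eq: "a = a0 # as @ [\<alpha>]"
    using la n by (cases a; cases "tl a" rule: rev_cases) auto
  obtain bs \<beta> \<gamma> where b_eq: "b = bs @ [\<beta>, \<gamma>]"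
    using lb n by (cases b rule: rev_cases; cases "butlast b" rule: rev_cases) auto
  have "?\<pi> permutes set (rev [n..<2 * n])"
    by (rule cycle_permutes)
  then have \<pi>: "?\<pi> permutes {1..2 * n}"
    by (rule permutes_subset) (use n in auto)
  have "a @ b \<in> idxs d (2 * n)"
    using a b by (auto simp: idxs_def)
  then have "perm_vec d (2 * n) ?\<pi> (tau n (tensor_op 1 (mat_op A) id_op)) (a @ b)
      = tau n (tensor_op 1 (mat_op A) id_op) (perm_idx (2 * n) (inv_into UNIV ?\<pi>) (a @ b))"
    by (rule perm_vec_apply[OF \<pi>])
  also have "perm_idx (2 * n) (inv_into UNIV ?\<pi>) (a @ b) = (a0 # as @ [\<beta>]) @ \<alpha> # bs @ [\<gamma>]"
  proof -
    have "length (a0 # as) = n - 1" and "length bs = n - 2"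
      using la lb n by (auto simp: a_eq b_eq)
    from perm_idx_inv_rev_cycle[OF this, of "[\<gamma>]" \<alpha> \<beta>]
    show ?thesis
      using n by (simp add: a_eq b_eq mult_2 Suc_diff_Suc numeral_2_eq_2)
  qed
  also have "tau n (tensor_op 1 (mat_op A) id_op) ((a0 # as @ [\<beta>]) @ \<alpha> # bs @ [\<gamma>])
      = (if as @ [\<beta>] = bs @ [\<gamma>] then A $$ (a0, \<alpha>) else 0)"
  proof -
    have "length (a0 # as @ [\<beta>]) = n"
      using la by (simp add: a_eq)
    then show ?thesis
      unfolding tau_append[OF \<open>length (a0 # as @ [\<beta>]) = n\<close>] tensor_mat_op_id_op_Cons by simp
  qed
  finally show ?thesis
    by (auto simp: tau_inv_def a_eq b_eq)
qed

theorem proposition6: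
  fixes d k :: nat and A :: "complex mat"
  assumes "A \<in> carrier_mat d d" and "k \<ge> 3"
  defines "k' \<equiv> k - 1"
  defines "\<pi> \<equiv> cycle_of_list (rev [k'..<2 * k'])"
  shows "op_eq d k'
     (ptr1 d (op_mult d k (ptrans k (perm_op k (cycle_of_list [1..<k + 1])))
                          (tensor_op 1 (mat_op A) id_op)))
     (tau_inv (perm_vec d (2 * k') \<pi> (tau k' (tensor_op 1 (mat_op A) id_op))))"
proof -
  have k: "k = Suc k'" and k': "2 \<le> k'"
    using assms(2) unfolding k'_def by auto
  show ?thesis
    unfolding op_eq_def \<pi>_def k
    by (intro ballI)
      (simp only: ptr1_mult_ptrans_shift_cycle_tensor[OF k'] tau_inv_perm_vec_rev_cycle_tensor[OF k'])
qed

end
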